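(* Let $\mathcal{E}\subseteq \mathrm{CL}(\mathbb{R})$. The following conditions are equivalent: (1) there exists $\mathcal{G}\subseteq C(\mathbb{R},\mathbb{R})$ such that $\mathcal{E}\in \mathcal{K}_\mathcal{G}$; (2) $\mathcal{E}$ is hereditary.
   Context: $\mathrm{CL}(\mathbb{R})$ denotes the family of all closed subsets of $\mathbb{R}$ and $C(\mathbb{R},\mathbb{R})$ the set of all continuous functions $\mathbb{R}\to\mathbb{R}$. For $\mathcal{G}\subseteq C(\mathbb{R},\mathbb{R})$ let $R_\mathcal{G}=\{(f,E)\in C(\mathbb{R},\mathbb{R})\times\mathrm{CL}(\mathbb{R}):(\exists g\in\mathcal{G})\, f\restriction E=g\restriction E\}$. For $\mathcal{F}\subseteq C(\mathbb{R},\mathbb{R})$ and $\mathcal{E}\subseteq\mathrm{CL}(\mathbb{R})$ put $E_\mathcal{G}(\mathcal{F})=\{E\in\mathrm{CL}(\mathbb{R}):(\forall f\in\mathcal{F})\,(f,E)\in R_\mathcal{G}\}$ and $F_\mathcal{G}(\mathcal{E})=\{f\in C(\mathbb{R},\mathbb{R}):(\forall E\in\mathcal{E})\,(f,E)\in R_\mathcal{G}\}$. Let $\mathcal{K}_\mathcal{G}=\{E_\mathcal{G}(\mathcal{F}):\mathcal{F}\subseteq C(\mathbb{R},\mathbb{R})\}$ (equivalently, the families $\mathcal{E}$ with $E_\mathcal{G}(F_\mathcal{G}(\mathcal{E}))=\mathcal{E}$). A family $\mathcal{E}\subseteq\mathrm{CL}(\mathbb{R})$ is hereditary if for all $D,E\in\mathrm{CL}(\mathbb{R})$,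 $D\subseteq E\in\mathcal{E}$ implies $D\in\mathcal{E}$. *)

theory Defs
  imports "HOL-Analysis.Analysis"
begin

definition CRR :: "(real \<Rightarrow> real) set" where
  "CRR = {f. continuous_on UNIV f}"

definition CLR :: "real set set" where
  "CLR = {E. closed E}"

definition R_G :: "(real \<Rightarrow> real) set \<Rightarrow> ((real \<Rightarrow> real) \<times> real set) set" where
  "R_G G = {(f, E). f \<in> CRR \<and> E \<in> CLR \<and> (\<exists>g\<in>G. \<forall>x\<in>E. f x = g x)}"

definition E_G :: "(real \<Rightarrow> real) set \<Rightarrow> (real \<Rightarrow> real) set \<Rightarrow> real set set" where
  "E_G G F = {E \<in> CLR. \<forall>f\<in>F. (f, E) \<in> R_G G}"

definition F_G :: "(real \<Rightarrow> real) set \<Rightarrow> real set set \<Rightarrow> (real \<Rightarrow> real) set" where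
  "F_G G \<E> = {f \<in> CRR. \<forall>E\<in>\<E>. (f, E) \<in> R_G G}"

definition K_G :: "(real \<Rightarrow> real) set \<Rightarrow> real set set set" where
  "K_G G = {E_G G F | F. F \<subseteq> CRR}"

definition hereditary :: "real set set \<Rightarrow> bool" where
  "hereditary \<E> \<longleftrightarrow> (\<forall>D E. D \<in> CLR \<and> E \<in> CLR \<and> D \<subseteq> E \<and> E \<in> \<E> \<longrightarrow> D \<in> \<E>)"

end

theory Submission
  imports Defs
begin

text \<open>Agreement on a closed set passes to its closed subsets, so every \<open>E_G G F\<close> is
hereditary. Conversely, each closed set is the zero set of a continuous function (its
distance function), so a hereditary family \<open>\<E>\<close> is recovered as \<open>E_G G {0}\<close>, where \<open>G\<close>
consists of the continuous functions whose zero sets belong to \<open>\<E>\<close>.\<close>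

lemma closed_eq_vimage_zero:
  fixes E :: "'a::metric_space set"
  assumes "closed E"
  obtains g :: "'a \<Rightarrow> real" where "continuous_on UNIV g" "g -` {0} = E"
proof (cases "E = {}")
  case True
  then show ?thesis
    using that[of "\<lambda>_. 1"] by simp
next
  case False
  have "(\<lambda>x. infdist x E) -` {0} = E"
    using in_closed_iff_infdist_zero[OF assms False] by auto
  then show ?thesis
    using that continuous_on_infdist[OF continuous_on_id] by blast
qed

lemma hereditary_E_G: "hereditary (E_G G F)"
  unfolding hereditary_def E_G_def R_G_def by (auto 0 4)

lemma E_G_const_zero: "E_G G {\<lambda>x. 0} = {E \<in> CLR. \<exists>g\<in>G. E \<subseteq> g -` {0}}"
  unfolding E_G_def R_G_def CRR_def by (auto simp: subset_eq)

lemma hereditary_eq_E_G_zero_sets: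
  assumes "\<E> \<subseteq> CLR" and "hereditary \<E>"
  shows "\<E> = E_G {g \<in> CRR. g -` {0} \<in> \<E>} {\<lambda>x. 0}"
proof (rule set_eqI)
  fix E
  show "E \<in> \<E> \<longleftrightarrow> E \<in> E_G {g \<in> CRR. g -` {0} \<in> \<E>} {\<lambda>x. 0}"
  proof
    assume "E \<in> \<E>"
    with assms(1) have "E \<in> CLR"
      by blast
    then obtain g :: "real \<Rightarrow> real" where "continuous_on UNIV g" and g: "g -` {0} = E"
      unfolding CLR_def by (blast elim: closed_eq_vimage_zero)
    then have "g \<in> {g \<in> CRR. g -` {0} \<in> \<E>}"
      using \<open>E \<in> \<E>\<close> by (simp add: CRR_def)
    with \<open>E \<in> CLR\<close> g show "E \<in> E_G {g \<in> CRR. g -` {0} \<in> \<E>} {\<lambda>x. 0}"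
      unfolding E_G_const_zero by blast
  next
    assume "E \<in> E_G {g \<in> CRR. g -` {0} \<in> \<E>} {\<lambda>x. 0}"
    then obtain g where "E \<in> CLR" "g \<in> CRR" "g -` {0} \<in> \<E>" "E \<subseteq> g -` {0}"
      unfolding E_G_const_zero by blast
    moreover have "g -` {0} \<in> CLR"
      using \<open>g \<in> CRR\<close> closed_vimage[OF closed_singleton] unfolding CRR_def CLR_def by blast
    ultimately show "E \<in> \<E>"
      using assms(2) unfolding hereditary_def by blast
  qed
qed

theorem proposition2p3:
  assumes "\<E> \<subseteq> CLR"
  shows "(\<exists>G. G \<subseteq> CRR \<and> \<E> \<in> K_G G) \<longleftrightarrow> hereditary \<E>"
proof
  assume "\<exists>G. G \<subseteq> CRR \<and> \<E> \<in> K_G G"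
  then show "hereditary \<E>"
    unfolding K_G_def using hereditary_E_G by blast
next
  assume "hereditary \<E>"
  define G where "G = {g \<in> CRR. g -` {0} \<in> \<E>}"
  have "\<E> = E_G G {\<lambda>x. 0}"
    unfolding G_def using assms \<open>hereditary \<E>\<close> by (rule hereditary_eq_E_G_zero_sets)
  moreover have "{\<lambda>x. 0} \<subseteq> CRR"
    by (simp add: CRR_def)
  ultimately have "\<E> \<in> K_G G"
    unfolding K_G_def by auto
  moreover have "G \<subseteq> CRR"
    unfolding G_def by blast
  ultimately show "\<exists>G. G \<subseteq> CRR \<and> \<E> \<in> K_G G"
    by blast
qed

end
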